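(* Let $\mathcal M=(M,<,+,0,\ldots)$ be a definably complete locally o-minimal expansion of an ordered abelian group. Let $C\subseteq M^m$ be a definable, closed and bounded set and let $\varphi,\psi:C\to M_{>0}$ be definable functions such that for every $x\in C$ there is $\delta>0$ with $\varphi(x')\ge\psi(x)$ for all $x'\in C$ satisfying $|x'-x|<\delta$. Then $\inf\varphi(C)>0$.
   Context: Definable = with parameters; definably complete: sup/inf of definable subsets of $M$ exist in $M\cup\{\pm\infty\}$; locally o-minimal: each definable subset of $M$ is, near each point, a finite union of points and open intervals. $M_{>0}=\{x\in M:x>0\}$, $|x|=\max_i|x_i|$. *)

theory Defs
  imports Main
begin

text \<open>Definable (with parameters) = member of some S n.\<close>

definition tuples :: "nat \<Rightarrow> 'a list set" where
  "tuples n = {xs. length xs = n}"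

definition is_structure :: "(nat \<Rightarrow> 'a list set set) \<Rightarrow> bool" where
  "is_structure S \<longleftrightarrow>
     (\<forall>n. \<forall>A\<in>S n. A \<subseteq> tuples n) \<and>
     (\<forall>n. {} \<in> S n) \<and>
     (\<forall>n. \<forall>A\<in>S n. tuples n - A \<in> S n) \<and>
     (\<forall>n. \<forall>A\<in>S n. \<forall>B\<in>S n. A \<union> B \<in> S n) \<and>
     (\<forall>n. \<forall>A\<in>S n. {x # xs | x xs. xs \<in> A} \<in> S (Suc n)) \<and>
     (\<forall>n. \<forall>A\<in>S n. {xs @ [x] | x xs. xs \<in> A} \<in> S (Suc n)) \<and>
     (\<forall>n i j. i < n \<longrightarrow> j < n \<longrightarrow> {xs \<in> tuples n. xs ! i = xs ! j} \<in> S n) \<and>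
     (\<forall>n. \<forall>A\<in>S (Suc n). butlast ` A \<in> S n)"

text \<open>S is a structure expanding (M,<,+,0), with all parameters (singletons) definable.\<close>
definition expands_oag :: "(nat \<Rightarrow> ('a::linordered_ab_group_add) list set set) \<Rightarrow> bool" where
  "expands_oag S \<longleftrightarrow> is_structure S \<and>
     {[x, y] | x y. x < y} \<in> S 2 \<and>
     {[x, y, z] | x y z. x + y = z} \<in> S 3 \<and>
     (\<forall>a. {[a]} \<in> S 1)"

definition definable_set1 :: "(nat \<Rightarrow> 'a list set set) \<Rightarrow> 'a set \<Rightarrow> bool" where
  "definable_set1 S A \<longleftrightarrow> (\<lambda>x. [x]) ` A \<in> S 1"

definition definably_complete :: "(nat \<Rightarrow> ('a::linorder) list set set) \<Rightarrow> bool" where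
  "definably_complete S \<longleftrightarrow>
     (\<forall>A. definable_set1 S A \<longrightarrow> A \<noteq> {} \<longrightarrow> (\<exists>b. \<forall>x\<in>A. x \<le> b) \<longrightarrow>
        (\<exists>s. (\<forall>x\<in>A. x \<le> s) \<and> (\<forall>b. (\<forall>x\<in>A. x \<le> b) \<longrightarrow> s \<le> b))) \<and>
     (\<forall>A. definable_set1 S A \<longrightarrow> A \<noteq> {} \<longrightarrow> (\<exists>b. \<forall>x\<in>A. b \<le> x) \<longrightarrow>
        (\<exists>s. (\<forall>x\<in>A. s \<le> x) \<and> (\<forall>b. (\<forall>x\<in>A. b \<le> x) \<longrightarrow> b \<le> s)))"

definition fin_union_pts_intervals :: "('a::linorder) set \<Rightarrow> bool" where
  "fin_union_pts_intervals X \<longleftrightarrow>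
     (\<exists>P J. finite P \<and> finite J \<and> X = P \<union> (\<Union>(u, v)\<in>J. {u<..<v}))"

definition locally_o_minimal :: "(nat \<Rightarrow> ('a::linorder) list set set) \<Rightarrow> bool" where
  "locally_o_minimal S \<longleftrightarrow>
     (\<forall>A a. definable_set1 S A \<longrightarrow>
        (\<exists>b c. b < a \<and> a < c \<and> fin_union_pts_intervals (A \<inter> {b<..<c})))"

definition supdist :: "('a::linordered_ab_group_add) list \<Rightarrow> 'a list \<Rightarrow> 'a" where
  "supdist xs ys = foldr max (map (\<lambda>(x, y). max (x - y) (y - x)) (zip xs ys)) 0"

definition closed_in_tuples :: "nat \<Rightarrow> ('a::linordered_ab_group_add) list set \<Rightarrow> bool" where
  "closed_in_tuples m C \<longleftrightarrow> C \<subseteq> tuples m \<and>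
     (\<forall>x\<in>tuples m - C. \<exists>e>0. \<forall>y\<in>C. \<not> supdist y x < e)"

definition bounded_tuples :: "('a::linordered_ab_group_add) list set \<Rightarrow> bool" where
  "bounded_tuples C \<longleftrightarrow> (\<exists>R. \<forall>x\<in>C. supdist x (map (\<lambda>_. 0) x) \<le> R)"

definition definable_fun :: "(nat \<Rightarrow> 'a list set set) \<Rightarrow> nat \<Rightarrow> 'a list set \<Rightarrow> ('a list \<Rightarrow> 'a) \<Rightarrow> bool" where
  "definable_fun S m C f \<longleftrightarrow> {xs @ [f xs] | xs. xs \<in> C} \<in> S (Suc m)"

definition is_glb :: "('a::linorder) \<Rightarrow> 'a set \<Rightarrow> bool" where
  "is_glb s A \<longleftrightarrow> (\<forall>x\<in>A. s \<le> x) \<and> (\<forall>b. (\<forall>x\<in>A. b \<le> x) \<longrightarrow> b \<le> s)"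

end

theory Submission
  imports Defs
begin

text \<open>Suppose \<open>\<phi>\<close> takes arbitrarily small values on \<open>C\<close>. The sets
  \<open>D\<^sub>t = {x \<in> C. \<phi> x < t}\<close> form a definable family, decreasing as \<open>t \<rightarrow> 0\<close>, of nonempty
  bounded sets. Definable completeness lets one choose, one coordinate at a time, a lim inf
  \<open>p\<close> such that every \<open>D\<^sub>t\<close> meets the box of radius \<open>t\<close> around \<open>p\<close>. As \<open>C\<close> is closed,
  \<open>p \<in> C\<close>; but near \<open>p\<close> the function \<open>\<phi>\<close> is at least \<open>\<psi> p > 0\<close>, a contradiction. Hence
  \<open>\<phi>\<close> has a positive lower bound, and its infimum exists by definable completeness.\<close>

locale definable_structure =
  fixes S :: "nat \<Rightarrow> 'a list set set"
  assumes S_structure: "is_structure S"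
begin

lemma definable_subset_tuples: "A \<in> S n \<Longrightarrow> A \<subseteq> tuples n"
  and definable_empty: "{} \<in> S n"
  and definable_Diff_tuples: "A \<in> S n \<Longrightarrow> tuples n - A \<in> S n"
  and definable_Un: "A \<in> S n \<Longrightarrow> B \<in> S n \<Longrightarrow> A \<union> B \<in> S n"
  and definable_Cons: "A \<in> S n \<Longrightarrow> {x # xs | x xs. xs \<in> A} \<in> S (Suc n)"
  and definable_diagonal: "i < n \<Longrightarrow> j < n \<Longrightarrow> {xs \<in> tuples n. xs ! i = xs ! j} \<in> S n"
  and definable_butlast: "A \<in> S (Suc n) \<Longrightarrow> butlast ` A \<in> S n"
  using S_structure unfolding is_structure_def by simp_all

lemma definable_tuples: "tuples n \<in> S n"
  using definable_Diff_tuples[OF definable_empty] by simp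

lemma definable_Int:
  assumes "A \<in> S n" "B \<in> S n"
  shows "A \<inter> B \<in> S n"
proof -
  have "A \<inter> B = tuples n - ((tuples n - A) \<union> (tuples n - B))"
    using assms by (auto dest: definable_subset_tuples)
  then show ?thesis using assms by (simp add: definable_Diff_tuples definable_Un)
qed

lemma definable_drop: "A \<in> S k \<Longrightarrow> {ws \<in> tuples (j + k). drop j ws \<in> A} \<in> S (j + k)"
proof (induction j)
  case 0
  then show ?case using definable_subset_tuples[OF 0] by (simp add: Collect_conj_eq Int_absorb1)
next
  case (Suc j)
  have "{x # xs | x xs. xs \<in> {ws \<in> tuples (j + k). drop j ws \<in> A}}
      = {ws \<in> tuples (Suc j + k). drop (Suc j) ws \<in> A}"
    apply (auto simp: tuples_def)
    subgoal for ws by (cases ws) auto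
    done
  then show ?case using definable_Cons[OF Suc.IH[OF Suc.prems]] by simp
qed

lemma definable_take: "A \<in> S (n + k) \<Longrightarrow> take n ` A \<in> S n"
proof (induction k arbitrary: A)
  case 0
  have "take n ` A = A" using definable_subset_tuples[OF 0] by (force simp: tuples_def)
  then show ?case using 0 by simp
next
  case (Suc k)
  have "take n ` butlast ` A = take n ` A"
    using definable_subset_tuples[OF Suc.prems]
    by (force simp: tuples_def image_image take_butlast intro!: image_cong)
  moreover have "take n ` butlast ` A \<in> S n"
    using Suc.prems by (intro Suc.IH definable_butlast) simp
  ultimately show ?case by simp
qed

lemma definable_diagonals:
  "\<forall>j<k. ix ! j < N \<and> n + j < N \<Longrightarrow>
   {ws \<in> tuples N. \<forall>j<k. ws ! (n + j) = ws ! (ix ! j)} \<in> S N"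
proof (induction k)
  case 0
  then show ?case using definable_tuples by simp
next
  case (Suc k)
  have "{ws \<in> tuples N. \<forall>j<Suc k. ws ! (n + j) = ws ! (ix ! j)}
      = {ws \<in> tuples N. \<forall>j<k. ws ! (n + j) = ws ! (ix ! j)}
        \<inter> {ws \<in> tuples N. ws ! (n + k) = ws ! (ix ! k)}"
    by (auto simp: less_Suc_eq)
  also have "\<dots> \<in> S N"
    using Suc by (intro definable_Int definable_diagonal) simp_all
  finally show ?case .
qed

text \<open>The selected coordinates are appended as fresh variables, tied to the old
  ones by diagonals, and then projected away.\<close>
lemma definable_reindex:
  assumes A: "A \<in> S (length ix)" and ix: "\<forall>i\<in>set ix. i < n"
  shows "{xs \<in> tuples n. map (nth xs) ix \<in> A} \<in> S n"
proof -
  let ?k = "length ix"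
  let ?B = "{ws \<in> tuples (n + ?k). drop n ws \<in> A}"
  let ?D = "{ws \<in> tuples (n + ?k). \<forall>j<?k. ws ! (n + j) = ws ! (ix ! j)}"
  have "\<forall>j<?k. ix ! j < n + ?k \<and> n + j < n + ?k"
    using ix nth_mem by fastforce
  then have "?B \<inter> ?D \<in> S (n + ?k)"
    using definable_drop[OF A] by (intro definable_Int definable_diagonals)
  then have "take n ` (?B \<inter> ?D) \<in> S n"
    by (rule definable_take)
  moreover have "take n ` (?B \<inter> ?D) = {xs \<in> tuples n. map (nth xs) ix \<in> A}"
  proof (intro equalityI subsetI)
    fix xs assume "xs \<in> take n ` (?B \<inter> ?D)"
    then obtain ws where ws: "ws \<in> ?B" "ws \<in> ?D" "xs = take n ws" by blast
    have "drop n ws = map (nth xs) ix"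
      using ws ix by (auto simp: tuples_def intro!: nth_equalityI)
    then show "xs \<in> {xs \<in> tuples n. map (nth xs) ix \<in> A}" using ws by (auto simp: tuples_def)
  next
    fix xs assume xs: "xs \<in> {xs \<in> tuples n. map (nth xs) ix \<in> A}"
    then have "xs = take n (xs @ map (nth xs) ix)" "xs @ map (nth xs) ix \<in> ?B \<inter> ?D"
      using ix by (auto simp: tuples_def nth_append)
    then show "xs \<in> take n ` (?B \<inter> ?D)" by (rule image_eqI)
  qed
  ultimately show ?thesis by simp
qed

end

text \<open>A formula is evaluated at the list of values of its variables: \<open>Atom ix A\<close> says
  that the variables indexed by \<open>ix\<close> form a tuple in \<open>A\<close>, and \<open>Exist\<close> binds a new last
  variable.\<close>

datatype 'a fm = Atom "nat list" "'a list set" | Neg "'a fm" | Conj "'a fm" "'a fm" | Exist "'a fm"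

fun holds :: "'a fm \<Rightarrow> 'a list \<Rightarrow> bool" where
  "holds (Atom ix A) xs \<longleftrightarrow> map (nth xs) ix \<in> A"
| "holds (Neg f) xs \<longleftrightarrow> \<not> holds f xs"
| "holds (Conj f g) xs \<longleftrightarrow> holds f xs \<and> holds g xs"
| "holds (Exist f) xs \<longleftrightarrow> (\<exists>y. holds f (xs @ [y]))"

fun fm_wf :: "(nat \<Rightarrow> 'a list set set) \<Rightarrow> nat \<Rightarrow> 'a fm \<Rightarrow> bool" where
  "fm_wf S n (Atom ix A) \<longleftrightarrow> (\<forall>i\<in>set ix. i < n) \<and> A \<in> S (length ix)"
| "fm_wf S n (Neg f) \<longleftrightarrow> fm_wf S n f"
| "fm_wf S n (Conj f g) \<longleftrightarrow> fm_wf S n f \<and> fm_wf S n g"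
| "fm_wf S n (Exist f) \<longleftrightarrow> fm_wf S (Suc n) f"

fun Exists :: "nat \<Rightarrow> 'a fm \<Rightarrow> 'a fm" where
  "Exists 0 f = f"
| "Exists (Suc k) f = Exist (Exists k f)"

lemma holds_Exists: "holds (Exists k f) xs \<longleftrightarrow> (\<exists>ys. length ys = k \<and> holds f (xs @ ys))"
proof (induction k arbitrary: xs)
  case 0
  then show ?case by simp
next
  case (Suc k)
  have "(\<exists>y ys. length ys = k \<and> holds f (xs @ y # ys)) \<longleftrightarrow>
        (\<exists>ys. length ys = Suc k \<and> holds f (xs @ ys))"
    by (auto simp: length_Suc_conv)
  then show ?case using Suc by simp
qed

lemma fm_wf_Exists: "fm_wf S n (Exists k f) \<longleftrightarrow> fm_wf S (n + k) f"
  by (induction k arbitrary: n) auto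

lemma map_nth_append_upt: "map (nth (x @ ys)) [0..<length x] = x"
  by (intro nth_equalityI) (simp_all add: nth_append)

lemma tuples_Suc_iff: "xs \<in> tuples (Suc n) \<longleftrightarrow> (\<exists>ys y. xs = ys @ [y] \<and> ys \<in> tuples n)"
  by (cases xs rule: rev_cases) (auto simp: tuples_def)

lemma Collect_tuples_Suc_eq:
  assumes "\<And>x t. length x = n \<Longrightarrow> Q (x @ [t]) \<longleftrightarrow> P x t"
    and "\<And>x t. P x t \<Longrightarrow> length x = n"
  shows "{xs \<in> tuples (Suc n). Q xs} = {x @ [t] | x t. P x t}"
proof (intro equalityI subsetI)
  fix xs assume "xs \<in> {xs \<in> tuples (Suc n). Q xs}"
  then obtain x t where "xs = x @ [t]" "x \<in> tuples n" "Q (x @ [t])"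
    unfolding tuples_Suc_iff by blast
  then show "xs \<in> {x @ [t] | x t. P x t}"
    using assms(1) by (auto simp: tuples_def)
next
  fix xs assume "xs \<in> {x @ [t] | x t. P x t}"
  then obtain x t where "xs = x @ [t]" "P x t"
    by blast
  then show "xs \<in> {xs \<in> tuples (Suc n). Q xs}"
    using assms by (auto simp: tuples_def)
qed

lemma (in definable_structure) definable_fm:
  "fm_wf S n f \<Longrightarrow> {xs \<in> tuples n. holds f xs} \<in> S n"
proof (induction f arbitrary: n)
  case (Atom ix A)
  then show ?case by (simp add: definable_reindex)
next
  case (Neg f)
  have "{xs \<in> tuples n. holds (Neg f) xs} = tuples n - {xs \<in> tuples n. holds f xs}" by auto
  then show ?case using Neg by (simp add: definable_Diff_tuples)
next
  case (Conj f g)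
  have "{xs \<in> tuples n. holds (Conj f g) xs} = {xs \<in> tuples n. holds f xs} \<inter> {xs \<in> tuples n. holds g xs}"
    by auto
  then show ?case using Conj by (simp add: definable_Int)
next
  case (Exist f)
  have "{xs \<in> tuples n. holds (Exist f) xs} = butlast ` {xs \<in> tuples (Suc n). holds f xs}"
  proof (intro equalityI subsetI)
    fix xs assume "xs \<in> {xs \<in> tuples n. holds (Exist f) xs}"
    then obtain y where "xs @ [y] \<in> {xs \<in> tuples (Suc n). holds f xs}"
      by (auto simp: tuples_def)
    then show "xs \<in> butlast ` {xs \<in> tuples (Suc n). holds f xs}"
      by (rule rev_image_eqI) simp
  next
    fix xs assume "xs \<in> butlast ` {xs \<in> tuples (Suc n). holds f xs}"
    then obtain ys y where "ys @ [y] \<in> tuples (Suc n)" "holds f (ys @ [y])" "xs = ys"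
      by (auto simp: tuples_Suc_iff)
    then show "xs \<in> {xs \<in> tuples n. holds (Exist f) xs}"
      by (auto simp: tuples_def)
  qed
  then show ?case using Exist by (simp add: definable_butlast)
qed

definition less_rel :: "'a::linorder list set" where
  "less_rel = {[x, y] | x y. x < y}"

definition plus_rel :: "'a::linordered_ab_group_add list set" where
  "plus_rel = {[x, y, z] | x y z. x + y = z}"

definition fm_less :: "nat \<Rightarrow> nat \<Rightarrow> 'a::linorder fm" where
  "fm_less i j = Atom [i, j] less_rel"

definition fm_plus :: "nat \<Rightarrow> nat \<Rightarrow> nat \<Rightarrow> 'a::linordered_ab_group_add fm" where
  "fm_plus i j k = Atom [i, j, k] plus_rel"

definition fm_const :: "nat \<Rightarrow> 'a \<Rightarrow> 'a fm" where
  "fm_const i a = Atom [i] {[a]}"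

lemma holds_fm_less [simp]: "holds (fm_less i j) xs \<longleftrightarrow> xs ! i < xs ! j"
  by (simp add: fm_less_def less_rel_def)

lemma holds_fm_plus [simp]: "holds (fm_plus i j k) xs \<longleftrightarrow> xs ! i + xs ! j = xs ! k"
  by (auto simp: fm_plus_def plus_rel_def)

lemma holds_fm_const [simp]: "holds (fm_const i a) xs \<longleftrightarrow> xs ! i = a"
  by (simp add: fm_const_def)

locale oag_expansion =
  fixes S :: "nat \<Rightarrow> 'a::linordered_ab_group_add list set set"
  assumes expands: "expands_oag S"
begin

sublocale definable_structure S
  using expands by unfold_locales (simp add: expands_oag_def)

lemma fm_wf_less [simp]: "fm_wf S n (fm_less i j) \<longleftrightarrow> i < n \<and> j < n"
  using expands by (simp add: expands_oag_def fm_less_def less_rel_def numeral_2_eq_2)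

lemma fm_wf_plus [simp]: "fm_wf S n (fm_plus i j k) \<longleftrightarrow> i < n \<and> j < n \<and> k < n"
  using expands by (simp add: expands_oag_def fm_plus_def plus_rel_def numeral_3_eq_3)

lemma fm_wf_const [simp]: "fm_wf S n (fm_const i a) \<longleftrightarrow> i < n"
  using expands by (simp add: expands_oag_def fm_const_def)

lemma definable_set1_fm:
  assumes "fm_wf S 1 f" "\<And>y. holds f [y] \<longleftrightarrow> y \<in> A"
  shows "definable_set1 S A"
proof -
  have "{xs \<in> tuples 1. holds f xs} = (\<lambda>y. [y]) ` A"
    using assms(2) by (auto simp: tuples_def length_Suc_conv)
  then show ?thesis
    using definable_fm[OF assms(1)] by (simp add: definable_set1_def)
qed

end

lemma supdist_Cons: "supdist (a # x) (b # y) = max (max (a - b) (b - a)) (supdist x y)"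
  by (simp add: supdist_def)

lemma supdist_less:
  fixes x y :: "'a::linordered_ab_group_add list"
  assumes "length x = length y" "0 < e" "\<forall>i<length x. x ! i < y ! i + e \<and> y ! i < x ! i + e"
  shows "supdist x y < e"
  using assms
proof (induction x y rule: list_induct2)
  case Nil
  then show ?case by (simp add: supdist_def)
next
  case (Cons a x b y)
  then have "max (a - b) (b - a) < e" "supdist x y < e"
    by (force simp: algebra_simps)+
  then show ?case by (simp add: supdist_Cons)
qed

lemma nth_le_supdist:
  fixes x y :: "'a::linordered_ab_group_add list"
  assumes "length x = length y" "i < length x"
  shows "x ! i - y ! i \<le> supdist x y \<and> y ! i - x ! i \<le> supdist x y"
  using assms
proof (induction x y arbitrary: i rule: list_induct2)
  case Nil
  then show ?case by simp
next
  case (Cons a x b y)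
  then show ?case by (cases i) (auto simp: supdist_Cons le_max_iff_disj)
qed

lemma bounded_tuples_nth:
  fixes C :: "'a::linordered_ab_group_add list set"
  assumes "bounded_tuples C"
  obtains R where "\<And>x i. x \<in> C \<Longrightarrow> i < length x \<Longrightarrow> - R \<le> x ! i \<and> x ! i \<le> R"
proof -
  obtain R where R: "\<forall>x\<in>C. supdist x (map (\<lambda>_. 0) x) \<le> R"
    using assms by (auto simp: bounded_tuples_def)
  have "- R \<le> x ! i \<and> x ! i \<le> R" if "x \<in> C" "i < length x" for x i
  proof -
    have "x ! i \<le> supdist x (map (\<lambda>_. 0) x) \<and> - x ! i \<le> supdist x (map (\<lambda>_. 0) x)"
      using nth_le_supdist[of x "map (\<lambda>_. 0) x" i] that by simp
    moreover have "supdist x (map (\<lambda>_. 0) x) \<le> R"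
      using R that(1) by blast
    ultimately have "x ! i \<le> R" "- x ! i \<le> R"
      by (auto intro: order_trans)
    then show ?thesis
      by (simp add: minus_le_iff)
  qed
  then show ?thesis by (rule that)
qed

lemma closed_in_tuples_limit:
  assumes "closed_in_tuples m C" "length p = m" "\<forall>e>0. \<exists>x\<in>C. supdist x p < e"
  shows "p \<in> C"
proof (rule ccontr)
  assume "p \<notin> C"
  then have "p \<in> tuples m - C"
    using assms(2) by (simp add: tuples_def)
  then show False
    using assms(1,3) unfolding closed_in_tuples_def by blast
qed

lemma definably_complete_sup:
  assumes "definably_complete S" "definable_set1 S A" "A \<noteq> {}" "\<forall>x\<in>A. x \<le> b"
  obtains s where "\<forall>x\<in>A. x \<le> s" "\<And>b. \<forall>x\<in>A. x \<le> b \<Longrightarrow> s \<le> b"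
  using assms(1)[unfolded definably_complete_def, THEN conjunct1, rule_format, OF assms(2,3)] assms(4)
  by blast

lemma definably_complete_glb:
  assumes "definably_complete S" "definable_set1 S A" "A \<noteq> {}" "\<forall>x\<in>A. b \<le> x"
  obtains s where "is_glb s A"
  using assms(1)[unfolded definably_complete_def, THEN conjunct2, rule_format, OF assms(2,3)] assms(4)
  unfolding is_glb_def by blast

text \<open>A family of sets \<open>D\<^sub>t\<close> indexed by \<open>t\<close> is encoded by a single set \<open>D\<close> of tuples
  with fibres \<open>D\<^sub>t = {x. x @ [t] \<in> D}\<close>.\<close>

definition approx :: "'a::linordered_ab_group_add list set \<Rightarrow> 'a list \<Rightarrow> 'a list \<Rightarrow> 'a \<Rightarrow> bool" where
  "approx D p x t \<longleftrightarrow> x @ [t] \<in> D \<and> (\<forall>i<length p. x ! i < p ! i + t \<and> p ! i < x ! i + t)"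

definition approx_set :: "'a::linordered_ab_group_add list set \<Rightarrow> 'a list \<Rightarrow> 'a list set" where
  "approx_set D p = {x @ [t] | x t. approx D p x t}"

text \<open>The supremum of this set is the lim inf, as \<open>t \<rightarrow> 0\<close>, of the coordinate
  \<open>x ! length p\<close> over the points \<open>x\<close> with \<open>approx D p x t\<close>.\<close>
definition coord_lower_bounds :: "'a::linordered_ab_group_add list set \<Rightarrow> 'a list \<Rightarrow> 'a set" where
  "coord_lower_bounds D p = {y. \<exists>t>0. \<forall>x. approx D p x t \<longrightarrow> y \<le> x ! length p}"

lemma approx_snoc_iff:
  "approx D (p @ [a]) x t \<longleftrightarrow> approx D p x t \<and> x ! length p < a + t \<and> a < x ! length p + t"
  by (auto simp: approx_def nth_append less_Suc_eq)

lemma approx_mono: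
  assumes "\<And>x t t'. x @ [t] \<in> D \<Longrightarrow> t \<le> t' \<Longrightarrow> x @ [t'] \<in> D"
    and "t \<le> t'" "approx D p x t"
  shows "approx D p x t'"
  using assms unfolding approx_def by (meson add_left_mono order.strict_trans2)

context oag_expansion
begin

context
  fixes D :: "'a list set" and m :: nat
  assumes D: "D \<in> S (Suc m)"
begin

lemma approx_length: "approx D p x t \<Longrightarrow> length x = m"
  using definable_subset_tuples[OF D] by (auto simp: approx_def tuples_def)

lemma approx_set_Nil: "approx_set D [] = D"
  using definable_subset_tuples[OF D] by (fastforce simp: approx_set_def approx_def tuples_Suc_iff)

lemma definable_approx_set: "length p \<le> m \<Longrightarrow> approx_set D p \<in> S (Suc m)"
proof (induction p rule: rev_induct)
  case Nil
  then show ?case using D by (simp add: approx_set_Nil)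
next
  case (snoc a p)
  let ?k = "length p"
  let ?f = "Exists 3 (Conj (fm_const (m + 1) a) (Conj (fm_plus (m + 1) m (m + 2))
              (Conj (fm_plus ?k m (m + 3)) (Conj (fm_less ?k (m + 2)) (fm_less (m + 1) (m + 3))))))"
  have "{xs \<in> tuples (Suc m). holds ?f xs} \<in> S (Suc m)"
    using snoc.prems by (intro definable_fm) (simp add: fm_wf_Exists)
  moreover have "holds ?f (x @ [t]) \<longleftrightarrow> x ! ?k < a + t \<and> a < x ! ?k + t"
    if "length x = m" for x t
    using that snoc.prems by (auto simp: holds_Exists numeral_3_eq_3 length_Suc_conv nth_append)
  then have "approx_set D (p @ [a]) = approx_set D p \<inter> {xs \<in> tuples (Suc m). holds ?f xs}"
    by (auto simp: approx_set_def approx_snoc_iff tuples_Suc_iff tuples_def dest: approx_length)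
  ultimately show ?case
    using snoc by (simp add: definable_Int)
qed

lemma definable_lower_set:
  assumes "length p < m"
  shows "definable_set1 S (coord_lower_bounds D p)"
proof (rule definable_set1_fm)
  let ?k = "length p"
  let ?f = "Exist (Conj (Exist (Conj (fm_const 2 0) (fm_less 2 1)))
             (Neg (Exists m (Conj (Atom ([Suc (Suc 0)..<Suc (Suc m)] @ [1]) (approx_set D p)) (fm_less (?k + 2) 0)))))"
  show "fm_wf S 1 ?f"
    using assms definable_approx_set[of p] by (simp add: fm_wf_Exists del: upt_Suc)
  have coords: "map (nth (y # t # x)) [Suc (Suc 0)..<Suc (Suc m)] = x" if "length x = m" for y t :: 'a and x
    using that by (intro nth_equalityI) (auto simp del: upt_Suc)
  fix y
  have "holds ?f [y] \<longleftrightarrow> (\<exists>t>0. \<not> (\<exists>x. length x = m \<and> approx D p x t \<and> x ! ?k < y))"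
    using assms by (auto simp: holds_Exists coords approx_set_def nth_append cong: conj_cong simp del: upt_Suc)
  also have "\<dots> \<longleftrightarrow> (\<exists>t>0. \<forall>x. approx D p x t \<longrightarrow> y \<le> x ! ?k)"
    using approx_length by (auto simp: not_less)
  finally show "holds ?f [y] \<longleftrightarrow> y \<in> coord_lower_bounds D p"
    by (simp add: coord_lower_bounds_def)
qed

context
  fixes R :: 'a
  assumes complete: "definably_complete S"
    and mono: "\<And>x t t'. x @ [t] \<in> D \<Longrightarrow> t \<le> t' \<Longrightarrow> x @ [t'] \<in> D"
    and bounded: "\<And>x t i. x @ [t] \<in> D \<Longrightarrow> i < m \<Longrightarrow> - R \<le> x ! i \<and> x ! i \<le> R"
begin

lemma approx_snoc_sup:
  assumes ub: "\<forall>y\<in>coord_lower_bounds D p. y \<le> a"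
    and least: "\<And>b. \<forall>y\<in>coord_lower_bounds D p. y \<le> b \<Longrightarrow> a \<le> b"
    and t: "0 < t"
  shows "\<exists>x. approx D (p @ [a]) x t"
proof -
  let ?k = "length p"
  have "\<not> a \<le> a - t"
    using t by simp
  then have "\<not> (\<forall>y\<in>coord_lower_bounds D p. y \<le> a - t)"
    using least by blast
  then obtain y where "y \<in> coord_lower_bounds D p" and y: "a - t < y"
    by (auto simp: not_le)
  then obtain t' where t': "t' > 0" "\<forall>x. approx D p x t' \<longrightarrow> y \<le> x ! ?k"
    unfolding coord_lower_bounds_def by blast
  have "\<not> a + t \<le> a"
    using t by simp
  then have "a + t \<notin> coord_lower_bounds D p"
    using ub by blast
  then have "\<forall>s>0. \<exists>x. approx D p x s \<and> x ! ?k < a + t"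
    unfolding coord_lower_bounds_def by (auto simp: not_le)
  moreover have "0 < min t t'"
    using t t' by simp
  ultimately obtain x where x: "approx D p x (min t t')" "x ! ?k < a + t"
    by blast
  have "approx D p x t" "approx D p x t'"
    using approx_mono[OF mono _ x(1)] by simp_all
  have "a < y + t"
    using y by (simp add: diff_less_eq)
  also have "\<dots> \<le> x ! ?k + t"
    using t' \<open>approx D p x t'\<close> by simp
  finally show ?thesis
    using x \<open>approx D p x t\<close> by (auto simp: approx_snoc_iff)
qed

lemma approx_snoc_exists:
  assumes p: "length p < m" and near: "\<forall>t>0. \<exists>x. approx D p x t"
  shows "\<exists>a. \<forall>t>0. \<exists>x. approx D (p @ [a]) x t"
proof (cases "\<exists>t0::'a. 0 < t0")
  case False
  then show ?thesis by blast
next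
  case True
  then obtain t0 :: 'a where t0: "0 < t0" ..
  let ?L = "coord_lower_bounds D p"
  have "- R \<in> ?L"
    using t0 p by (auto simp: coord_lower_bounds_def approx_def dest: bounded)
  moreover have "y \<le> R" if y: "y \<in> ?L" for y
  proof -
    obtain t where "t > 0" "\<forall>x. approx D p x t \<longrightarrow> y \<le> x ! length p"
      using y unfolding coord_lower_bounds_def by blast
    moreover obtain x where "approx D p x t"
      using near calculation(1) by blast
    ultimately have "y \<le> x ! length p" "x ! length p \<le> R"
      using p by (auto simp: approx_def dest: bounded)
    then show "y \<le> R" by (rule order_trans)
  qed
  ultimately obtain a where "\<forall>y\<in>?L. y \<le> a" "\<And>b. \<forall>y\<in>?L. y \<le> b \<Longrightarrow> a \<le> b"
    using definably_complete_sup[OF complete definable_lower_set[OF p]] by blast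
  then show ?thesis
    using approx_snoc_sup by blast
qed

lemma definable_limit_point:
  assumes nonempty: "\<And>t. 0 < t \<Longrightarrow> \<exists>x. x @ [t] \<in> D"
  shows "\<exists>p. length p = m \<and> (\<forall>t>0. \<exists>x. x @ [t] \<in> D \<and> supdist x p < t)"
proof -
  have "\<exists>p. length p = k \<and> (\<forall>t>0. \<exists>x. approx D p x t)" if "k \<le> m" for k
    using that
  proof (induction k)
    case 0
    then show ?case using nonempty by (simp add: approx_def)
  next
    case (Suc k)
    then obtain p where p: "length p = k" "\<forall>t>0. \<exists>x. approx D p x t"
      by auto
    moreover have "length p < m"
      using Suc.prems p by simp
    ultimately obtain a where "\<forall>t>0. \<exists>x. approx D (p @ [a]) x t"
      using approx_snoc_exists by blast
    then show ?case
      using p by (intro exI[of _ "p @ [a]"]) simp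
  qed
  then obtain p where p: "length p = m" "\<forall>t>0. \<exists>x. approx D p x t"
    by blast
  have "\<exists>x. x @ [t] \<in> D \<and> supdist x p < t" if t: "0 < t" for t
  proof -
    obtain x where "approx D p x t"
      using p t by blast
    then show ?thesis
      using p t approx_length by (auto simp: approx_def intro!: supdist_less)
  qed
  then show ?thesis using p by blast
qed

end

end

context
  fixes m :: nat and C :: "'a list set" and \<phi> :: "'a list \<Rightarrow> 'a"
  assumes graph: "definable_fun S m C \<phi>" and C: "C \<subseteq> tuples m"
begin

lemma definable_strict_epigraph: "{x @ [t] | x t. x \<in> C \<and> \<phi> x < t} \<in> S (Suc m)"
proof -
  let ?f = "Exist (Conj (Atom ([0..<m] @ [Suc m]) {xs @ [\<phi> xs] | xs. xs \<in> C}) (fm_less (Suc m) m))"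
  have wf: "fm_wf S (Suc m) ?f"
    using graph by (simp add: definable_fun_def)
  have "holds ?f (x @ [t]) \<longleftrightarrow> x \<in> C \<and> \<phi> x < t" if "length x = m" for x t
    using that C map_nth_append_upt[of x "[t, _]"] by (auto simp: nth_append tuples_def)
  then have "{xs \<in> tuples (Suc m). holds ?f xs} = {x @ [t] | x t. x \<in> C \<and> \<phi> x < t}"
    using C by (intro Collect_tuples_Suc_eq) (auto simp: tuples_def)
  with definable_fm[OF wf] show ?thesis
    by simp
qed

lemma definable_image: "definable_set1 S (\<phi> ` C)"
proof (rule definable_set1_fm)
  let ?f = "Exists m (Atom ([Suc 0..<Suc m] @ [0]) {xs @ [\<phi> xs] | xs. xs \<in> C})"
  show "fm_wf S 1 ?f"
    using graph by (simp add: fm_wf_Exists definable_fun_def del: upt_Suc)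
  have coords: "map (nth (y # x)) [Suc 0..<Suc m] = x" if "length x = m" for y :: 'a and x
    using that by (intro nth_equalityI) (auto simp del: upt_Suc)
  show "holds ?f [y] \<longleftrightarrow> y \<in> \<phi> ` C" for y
    using C by (auto simp: holds_Exists coords tuples_def cong: conj_cong simp del: upt_Suc)
qed

end

lemma exists_pos_lower_bound:
  assumes complete: "definably_complete S" and graph: "definable_fun S m C \<phi>"
    and closed: "closed_in_tuples m C" and "bounded_tuples C"
    and \<psi>_pos: "\<forall>x\<in>C. 0 < \<psi> x"
    and \<psi>_le_\<phi>: "\<forall>x\<in>C. \<exists>\<delta>>0. \<forall>x'\<in>C. supdist x' x < \<delta> \<longrightarrow> \<psi> x \<le> \<phi> x'"
  shows "\<exists>t>0. \<forall>x\<in>C. t \<le> \<phi> x"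
proof (rule ccontr)
  assume "\<not> ?thesis"
  then have small: "\<exists>x\<in>C. \<phi> x < t" if "0 < t" for t
    using that by (auto simp: not_le)
  have C: "C \<subseteq> tuples m"
    using closed by (simp add: closed_in_tuples_def)
  obtain R where R: "\<And>x i. x \<in> C \<Longrightarrow> i < length x \<Longrightarrow> - R \<le> x ! i \<and> x ! i \<le> R"
    using bounded_tuples_nth[OF \<open>bounded_tuples C\<close>] by blast
  let ?D = "{x @ [t] | x t. x \<in> C \<and> \<phi> x < t}"
  have "\<exists>p. length p = m \<and> (\<forall>t>0. \<exists>x. x @ [t] \<in> ?D \<and> supdist x p < t)"
  proof (rule definable_limit_point[OF definable_strict_epigraph[OF graph C] complete])
    show "x @ [t'] \<in> ?D" if "x @ [t] \<in> ?D" "t \<le> t'" for x t t'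
      using that by (auto intro: less_le_trans)
    show "- R \<le> x ! i \<and> x ! i \<le> R" if "x @ [t] \<in> ?D" "i < m" for x t i
      using that R C by (auto simp: tuples_def)
    show "\<exists>x. x @ [t] \<in> ?D" if "0 < t" for t
      using small[OF that] by blast
  qed
  then obtain p where p: "length p = m" and near: "\<And>t. 0 < t \<Longrightarrow> \<exists>x\<in>C. \<phi> x < t \<and> supdist x p < t"
    by blast
  have "p \<in> C"
    using closed_in_tuples_limit[OF closed p] near by blast
  then obtain \<delta> where "\<delta> > 0" "\<forall>x'\<in>C. supdist x' p < \<delta> \<longrightarrow> \<psi> p \<le> \<phi> x'"
    using \<psi>_le_\<phi> by blast
  moreover have "0 < min \<delta> (\<psi> p)"
    using \<open>\<delta> > 0\<close> \<psi>_pos \<open>p \<in> C\<close> by simp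
  then obtain x where "x \<in> C" "\<phi> x < \<psi> p" "supdist x p < \<delta>"
    using near by fastforce
  ultimately show False
    by (meson not_le)
qed

end

theorem mainTheorem14:
  fixes S :: "nat \<Rightarrow> ('a::linordered_ab_group_add) list set set"
    and m :: nat and C :: "'a list set" and \<phi> \<psi> :: "'a list \<Rightarrow> 'a"
  assumes "expands_oag S" and "definably_complete S" and "locally_o_minimal S"
    and "C \<in> S m" and "closed_in_tuples m C" and "bounded_tuples C"
    and "definable_fun S m C \<phi>" and "definable_fun S m C \<psi>"
    and "\<forall>x\<in>C. 0 < \<phi> x" and "\<forall>x\<in>C. 0 < \<psi> x"
    and "\<forall>x\<in>C. \<exists>\<delta>>0. \<forall>x'\<in>C. supdist x' x < \<delta> \<longrightarrow> \<psi> x \<le> \<phi> x'"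
  shows "C = {} \<or> (\<exists>s. is_glb s (\<phi> ` C) \<and> 0 < s)"
proof (cases "C = {}")
  case False
  interpret oag_expansion S
    using assms(1) by unfold_locales
  obtain t where "0 < t" and t: "\<forall>x\<in>C. t \<le> \<phi> x"
    using exists_pos_lower_bound[OF assms(2,7,5,6,10,11)] by blast
  have "C \<subseteq> tuples m"
    using assms(5) by (simp add: closed_in_tuples_def)
  then obtain s where "is_glb s (\<phi> ` C)"
    using definably_complete_glb[OF assms(2) definable_image[OF assms(7)]] False t by blast
  moreover have "t \<le> s"
    using calculation t by (simp add: is_glb_def)
  ultimately show ?thesis
    using \<open>0 < t\<close> by auto
qed simp

end
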